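(* For all integers $m\ge1$ and $r\ge2$, the determinant of the Hessian matrix $\big(\partial_{\xi_i}\partial_{\xi_j}A_r(\xi)\big)_{i,j=1}^m$ is a nonzero polynomial in $\xi=(\xi_1,\dots,\xi_m)$.
   Context: $A_r(\xi_1,\dots,\xi_m)=\sum_{k\in\mathbb N^m,\ \sum_ik_i=r}\binom{r}{k_1,\dots,k_m}^2\prod_i\xi_i^{k_i}$, where $\binom{r}{k_1,\dots,k_m}$ is the multinomial coefficient. *)

theory Defs
  imports "HOL-Analysis.Analysis"
begin

definition multinom :: "nat \<Rightarrow> ('m::finite \<Rightarrow> nat) \<Rightarrow> real" where
  "multinom r k = real (fact r) / (\<Prod>i\<in>UNIV. real (fact (k i)))"

definition A :: "nat \<Rightarrow> real^'m::finite \<Rightarrow> real" where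
  "A r \<xi> = (\<Sum>k\<in>{k::'m \<Rightarrow> nat. (\<Sum>i\<in>UNIV. k i) = r}.
              (multinom r k)^2 * (\<Prod>i\<in>UNIV. (\<xi>$i) ^ (k i)))"

definition partial :: "'m::finite \<Rightarrow> (real^'m \<Rightarrow> real) \<Rightarrow> real^'m \<Rightarrow> real" where
  "partial i f x = deriv (\<lambda>t. f (x + t *\<^sub>R axis i 1)) 0"

definition hessian :: "(real^'m::finite \<Rightarrow> real) \<Rightarrow> real^'m \<Rightarrow> real^'m^'m" where
  "hessian f x = (\<chi> i j. partial i (partial j f) x)"

end

theory Submission
  imports Defs
begin

(* A_r is a polynomial, so its Hessian can be computed
   termwise: differentiating a monomial xi^k twice in directions j and i gives
   k_j (k_i - [i = j]) xi^(k - e_j - e_i).  At the coordinate point xi = e_a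
   a monomial is 1 if its exponent is supported on {a} and 0 otherwise, so
   the (i,j) entry of the Hessian at e_a comes from the single exponent
   k = (r-2) e_a + e_i + e_j.  Evaluating its multinomial coefficient shows
   that the Hessian at e_a is an "arrowhead" matrix: one value in the corner
   (a,a), one value on the rest of row and column a, one value on the rest of
   the diagonal and one off the diagonal.  A general invertibility criterion
   for such matrices, proved by solving H x = 0, then shows that the Hessian
   at e_a is invertible, hence has nonzero determinant. *)

definition mon :: "('m::finite \<Rightarrow> nat) \<Rightarrow> real^'m \<Rightarrow> real" where
  "mon k x = (\<Prod>i\<in>UNIV. (x$i) ^ (k i))"

definition lower :: "'m \<Rightarrow> ('m \<Rightarrow> nat) \<Rightarrow> ('m \<Rightarrow> nat)" where
  "lower j k = k(j := k j - 1)"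

lemma mon_along_axis:
  "mon k (x + t *\<^sub>R axis j 1) = (x$j + t) ^ k j * (\<Prod>i\<in>UNIV-{j}. (x$i) ^ (k i))"
proof -
  have "mon k (x + t *\<^sub>R axis j 1) =
      ((x + t *\<^sub>R axis j 1)$j) ^ (k j) * (\<Prod>i\<in>UNIV-{j}. ((x + t *\<^sub>R axis j 1)$i) ^ (k i))"
    unfolding mon_def by (subst prod.remove[of UNIV j]) auto
  also have "(\<Prod>i\<in>UNIV-{j}. ((x + t *\<^sub>R axis j 1)$i) ^ (k i)) = (\<Prod>i\<in>UNIV-{j}. (x$i) ^ (k i))"
    by (rule prod.cong) (auto simp: axis_def)
  finally show ?thesis by (simp add: axis_def)
qed

lemma mon_lower:
  "mon (lower j k) x = (x$j) ^ (k j - 1) * (\<Prod>i\<in>UNIV-{j}. (x$i) ^ (k i))"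
proof -
  have "mon (lower j k) x = (x$j) ^ (k j - 1) * (\<Prod>i\<in>UNIV-{j}. (x$i) ^ (lower j k i))"
    unfolding mon_def by (subst prod.remove[of UNIV j]) (auto simp: lower_def)
  also have "(\<Prod>i\<in>UNIV-{j}. (x$i) ^ (lower j k i)) = (\<Prod>i\<in>UNIV-{j}. (x$i) ^ (k i))"
    by (rule prod.cong) (auto simp: lower_def)
  finally show ?thesis .
qed

lemma partial_mon_sum:
  assumes "finite K"
  shows "partial j (\<lambda>x. \<Sum>k\<in>K. c k * mon (g k) x) x =
    (\<Sum>k\<in>K. c k * real (g k j) * mon (lower j (g k)) x)"
proof -
  have "((\<lambda>t. \<Sum>k\<in>K. c k * mon (g k) (x + t *\<^sub>R axis j 1)) has_field_derivative
          (\<Sum>k\<in>K. c k * real (g k j) * mon (lower j (g k)) x)) (at 0)"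
  proof (rule DERIV_sum)
    fix k
    have "((\<lambda>t. c k * ((x$j + t) ^ g k j * (\<Prod>i\<in>UNIV-{j}. (x$i) ^ (g k i)))) has_field_derivative
          c k * ((real (g k j) * (x$j + 0) ^ (g k j - 1) * 1) * (\<Prod>i\<in>UNIV-{j}. (x$i) ^ (g k i)))) (at 0)"
      by (intro derivative_eq_intros) auto
    then show "((\<lambda>t. c k * mon (g k) (x + t *\<^sub>R axis j 1)) has_field_derivative
          c k * real (g k j) * mon (lower j (g k)) x) (at 0)"
      unfolding mon_along_axis mon_lower by (simp add: mult.assoc)
  qed
  then show ?thesis unfolding partial_def by (rule DERIV_imp_deriv)
qed

lemma hessian_mon_sum:
  assumes "finite K"
  shows "hessian (\<lambda>x. \<Sum>k\<in>K. c k * mon k x) x $ i $ j =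
    (\<Sum>k\<in>K. c k * real (k j) * real (lower j k i) * mon (lower i (lower j k)) x)"
proof -
  have "partial j (\<lambda>x. \<Sum>k\<in>K. c k * mon k x) =
      (\<lambda>x. \<Sum>k\<in>K. (c k * real (k j)) * mon (lower j k) x)"
    using partial_mon_sum[OF assms, where g = "\<lambda>k. k"] by (simp add: fun_eq_iff)
  then show ?thesis
    unfolding hessian_def using partial_mon_sum[OF assms, where g = "lower j"] by simp
qed

definition exponents :: "nat \<Rightarrow> ('m::finite \<Rightarrow> nat) set" where
  "exponents r = {k. (\<Sum>i\<in>UNIV. k i) = r}"

lemma finite_exponents: "finite (exponents r :: ('m::finite \<Rightarrow> nat) set)"
proof (rule finite_subset)
  show "exponents r \<subseteq> Pi\<^sub>E (UNIV :: 'm set) (\<lambda>_. {..r})"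
  proof
    fix k :: "'m \<Rightarrow> nat" assume "k \<in> exponents r"
    then have "k i \<le> r" for i
      using member_le_sum[of i UNIV k] by (auto simp: exponents_def)
    then show "k \<in> Pi\<^sub>E UNIV (\<lambda>_. {..r})" by (auto simp: PiE_UNIV_domain)
  qed
  show "finite (Pi\<^sub>E (UNIV :: 'm set) (\<lambda>_. {..r}))" by (rule finite_PiE) auto
qed

lemma A_eq_mon_sum: "A r = (\<lambda>x. \<Sum>k\<in>exponents r. (multinom r k)^2 * mon k x)"
  by (simp add: A_def mon_def exponents_def fun_eq_iff)

lemma mon_axis: "mon k (axis a 1) = (if \<forall>l. l \<noteq> a \<longrightarrow> k l = 0 then 1 else 0)"
proof (cases "\<forall>l. l \<noteq> a \<longrightarrow> k l = 0")
  case True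
  then show ?thesis unfolding mon_def by (auto intro!: prod.neutral simp: axis_def)
next
  case False
  then obtain l where "l \<noteq> a" "k l \<noteq> 0" by auto
  then show ?thesis unfolding mon_def
    by (auto intro!: prod_zero bexI[where x = l] simp: axis_def)
qed

text \<open>The only exponent contributing to the \<open>(i,j)\<close> Hessian entry of \<open>A_r\<close>
  at \<open>e_a\<close>: \<open>(r - 2) e_a + e_i + e_j\<close>.\<close>

definition axis_exponent :: "nat \<Rightarrow> 'm \<Rightarrow> 'm \<Rightarrow> 'm \<Rightarrow> ('m \<Rightarrow> nat)" where
  "axis_exponent r a i j =
     (\<lambda>l. (if l = a then r - 2 else 0) + (if l = i then 1 else 0) + (if l = j then 1 else 0))"

lemma axis_exponent_mem:
  assumes "r \<ge> 2"
  shows "axis_exponent r a i j \<in> exponents r"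
  using assms by (simp add: axis_exponent_def exponents_def sum.distrib)

lemma axis_exponent_unique:
  assumes r: "r \<ge> 2" and k: "k \<in> exponents r"
    and nonzero: "k j \<noteq> 0" "lower j k i \<noteq> 0"
    and support: "\<forall>l. l \<noteq> a \<longrightarrow> lower i (lower j k) l = 0"
  shows "k = axis_exponent r a i j"
proof -
  let ?k0 = "axis_exponent r a i j"
  have off_a: "k l = ?k0 l" if "l \<noteq> a" for l
    using support[rule_format, OF that] nonzero that
    by (auto simp: axis_exponent_def lower_def split: if_splits)
  have "k a + (\<Sum>l\<in>UNIV-{a}. k l) = ?k0 a + (\<Sum>l\<in>UNIV-{a}. ?k0 l)"
    using k axis_exponent_mem[OF r, of a i j]
    by (simp add: exponents_def sum.remove[of UNIV a])
  moreover have "(\<Sum>l\<in>UNIV-{a}. k l) = (\<Sum>l\<in>UNIV-{a}. ?k0 l)"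
    using off_a by (intro sum.cong) auto
  ultimately have "k a = ?k0 a" by simp
  with off_a show ?thesis by (metis ext)
qed

lemma hessian_A_axis:
  fixes a i j :: "'m::finite"
  assumes r: "r \<ge> 2"
  shows "hessian (A r) (axis a 1) $ i $ j =
    (multinom r (axis_exponent r a i j))^2 * real (axis_exponent r a i j j)
      * real (lower j (axis_exponent r a i j) i)"
proof -
  let ?k0 = "axis_exponent r a i j"
  let ?f = "\<lambda>k::'m \<Rightarrow> nat.
    (multinom r k)^2 * real (k j) * real (lower j k i) * mon (lower i (lower j k)) (axis a 1)"
  have "hessian (A r) (axis a 1) $ i $ j = (\<Sum>k\<in>exponents r. ?f k)"
    unfolding A_eq_mon_sum by (rule hessian_mon_sum[OF finite_exponents])
  also have "\<dots> = (\<Sum>k\<in>exponents r. if k = ?k0 then ?f ?k0 else 0)"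
  proof (rule sum.cong)
    fix k :: "'m \<Rightarrow> nat" assume k: "k \<in> exponents r"
    show "?f k = (if k = ?k0 then ?f ?k0 else 0)"
    proof (cases "?f k = 0")
      case False
      then have "k j \<noteq> 0" "lower j k i \<noteq> 0" "\<forall>l. l \<noteq> a \<longrightarrow> lower i (lower j k) l = 0"
        by (auto simp: mon_axis split: if_splits)
      then show ?thesis using axis_exponent_unique[OF r k] by simp
    qed auto
  qed simp
  also have "\<dots> = ?f ?k0"
    using axis_exponent_mem[OF r, of a i j] by (simp add: finite_exponents)
  also have "mon (lower i (lower j ?k0)) (axis a 1) = 1"
    unfolding mon_axis by (auto simp: axis_exponent_def lower_def)
  finally show ?thesis by simp
qed

lemma multinom_axis_exponent:
  fixes a i j :: "'m::finite"
  assumes r: "r \<ge> 2"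
  shows "multinom r (axis_exponent r a i j) =
    (if i = a \<and> j = a then 1 else if i = a \<or> j = a then real r
     else if i = j then real r * (real r - 1) / 2 else real r * (real r - 1))"
proof -
  obtain s where rs: "r = s + 2" using r by (metis add.commute le_Suc_ex)
  define f where "f = real (fact s)"
  have "f > 0" by (simp add: f_def)
  have "(\<Prod>l\<in>UNIV. real (fact (axis_exponent r a i j l))) =
      (\<Prod>l\<in>{a, i, j}. real (fact (axis_exponent r a i j l)))"
    by (rule prod.mono_neutral_right) (auto simp: axis_exponent_def)
  also have "\<dots> = (if i = a \<and> j = a then (real s + 2) * (real s + 1) * f
      else if i = a \<or> j = a then (real s + 1) * f else if i = j then 2 * f else f)"
    by (auto simp: axis_exponent_def rs f_def insert_commute numeral_2_eq_2 algebra_simps)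
  finally have factorials: "(\<Prod>l\<in>UNIV. real (fact (axis_exponent r a i j l))) = \<dots>" .
  have fact_r: "real (fact r) = (real s + 2) * (real s + 1) * f"
    by (simp add: rs f_def algebra_simps)
  have "(real s + 1) * f > 0" using \<open>f > 0\<close> by simp
  then show ?thesis
    unfolding multinom_def factorials fact_r by (auto simp: rs add.commute)
qed

lemma axis_exponent_derivative_factor:
  fixes a i j :: "'m::finite"
  assumes r: "r \<ge> 2"
  shows "real (axis_exponent r a i j j) * real (lower j (axis_exponent r a i j) i) =
    (if i = a \<and> j = a then real r * (real r - 1) else if i = a \<or> j = a then real r - 1
     else if i = j then 2 else 1)"
  using r by (auto simp: axis_exponent_def lower_def of_nat_diff)

lemma hessian_A_axis_entries:
  fixes a i j :: "'m::finite"
  assumes r: "r \<ge> 2"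
  shows "hessian (A r) (axis a 1) $ i $ j =
    (if i = a \<and> j = a then real r * (real r - 1)
     else if i = a \<or> j = a then (real r)^2 * (real r - 1)
     else if i = j then (real r)^2 * (real r - 1)^2 / 2
     else (real r)^2 * (real r - 1)^2)"
  unfolding hessian_A_axis[OF r] mult.assoc axis_exponent_derivative_factor[OF r]
    multinom_axis_exponent[OF r]
  by (simp add: power2_eq_square)

lemma two_by_two_trivial:
  fixes p q u v x y :: real
  assumes "p * x + q * y = 0" "u * x + v * y = 0" "p * v - q * u \<noteq> 0"
  shows "x = 0 \<and> y = 0"
proof -
  have "(p * v - q * u) * x = v * (p * x + q * y) - q * (u * x + v * y)"
    "(p * v - q * u) * y = p * (u * x + v * y) - u * (p * x + q * y)"
    by (simp_all add: algebra_simps)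
  then have "(p * v - q * u) * x = 0" "(p * v - q * u) * y = 0"
    using assms(1,2) by simp_all
  then show ?thesis using assms(3) by simp
qed

text \<open>A vector in the kernel is
  constant (say \<open>c\<close>) away from \<open>a\<close>, and \<open>(x_a, c)\<close> then solves a \<open>2 \<times> 2\<close> system
  whose determinant is the second nondegeneracy condition.\<close>

lemma arrowhead_invertible:
  fixes M :: "real^'n::finite^'n" and a :: 'n
  defines "m \<equiv> real CARD('n) - 1"
  assumes corner: "M$a$a = \<alpha>"
    and border: "\<And>j. j \<noteq> a \<Longrightarrow> M$a$j = \<beta> \<and> M$j$a = \<beta>"
    and diag: "\<And>i. i \<noteq> a \<Longrightarrow> M$i$i = \<delta>"
    and off: "\<And>i j. i \<noteq> a \<Longrightarrow> j \<noteq> a \<Longrightarrow> i \<noteq> j \<Longrightarrow> M$i$j = \<gamma>"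
    and "\<delta> \<noteq> \<gamma>" and D: "\<alpha> * (\<gamma> * m + \<delta> - \<gamma>) - \<beta> * m * \<beta> \<noteq> 0"
  shows "invertible M"
proof -
  have "\<forall>x. M *v x = 0 \<longrightarrow> x = 0"
  proof (intro allI impI)
    fix x :: "real^'n" assume Mx: "M *v x = 0"
    define S where "S = (\<Sum>j\<in>UNIV-{a}. x$j)"
    define c where "c = - (\<beta> * x$a + \<gamma> * S) / (\<delta> - \<gamma>)"
    have row: "(M *v x)$i = M$i$a * x$a + (\<Sum>j\<in>UNIV-{a}. M$i$j * x$j)" for i
      unfolding matrix_vector_mult_def by (simp add: sum.remove[of UNIV a])
    have row_a: "\<alpha> * x$a + \<beta> * S = 0"
      using Mx row[of a] by (simp add: corner border S_def sum_distrib_left)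
    have row_i: "x$i = c" if "i \<noteq> a" for i
    proof -
      have "(\<Sum>j\<in>UNIV-{a}. M$i$j * x$j) =
          (\<Sum>j\<in>UNIV-{a}. \<gamma> * x$j + (if j = i then (\<delta> - \<gamma>) * x$j else 0))"
        using that by (intro sum.cong) (auto simp: diag off algebra_simps)
      also have "\<dots> = \<gamma> * S + (\<delta> - \<gamma>) * x$i"
        using that by (simp add: sum.distrib sum_distrib_left S_def)
      finally have "\<beta> * x$a + \<gamma> * S + (\<delta> - \<gamma>) * x$i = 0"
        using Mx row[of i] that border by simp
      then show ?thesis using \<open>\<delta> \<noteq> \<gamma>\<close> by (simp add: c_def field_simps)
    qed
    have S: "S = m * c"
      using row_i by (simp add: S_def m_def card_Diff_singleton of_nat_diff)
    have "\<alpha> * x$a + (\<beta> * m) * c = 0" using row_a S by simp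
    moreover have "\<beta> * x$a + (\<gamma> * m + \<delta> - \<gamma>) * c = 0"
    proof -
      have "(\<delta> - \<gamma>) * c = - (\<beta> * x$a + \<gamma> * S)"
        using \<open>\<delta> \<noteq> \<gamma>\<close> by (simp add: c_def)
      then show ?thesis unfolding S by (simp add: algebra_simps)
    qed
    ultimately have "x$a = 0" "c = 0" using two_by_two_trivial[OF _ _ D] by blast+
    show "x = 0"
    proof (rule vec_eq_iff[THEN iffD2, rule_format])
      fix i show "x$i = 0$i"
        using \<open>x$a = 0\<close> \<open>c = 0\<close> row_i by (cases "i = a") auto
    qed
  qed
  then show ?thesis unfolding invertible_left_inverse matrix_left_invertible_ker .
qed

lemma det_hessian_A_axis:
  fixes a :: "'m::finite"
  assumes "r \<ge> 2"
  shows "det (hessian (A r) (axis a 1)) \<noteq> 0"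
proof -
  define R where "R = real r"
  define m where "m = real CARD('m) - 1"
  define \<gamma> where "\<gamma> = R^2 * (R - 1)^2"
  have "R \<ge> 2" "m \<ge> 0" using assms by (simp_all add: R_def m_def)
  then have "\<gamma> > 0" by (simp add: \<gamma>_def)
  have "R * (R - 1) * (\<gamma> * m + \<gamma> / 2 - \<gamma>) - R^2 * (R - 1) * m * (R^2 * (R - 1))
      = - (R^3 * (R - 1)^2 * (2 * m + R - 1)) / 2"
    by (simp add: \<gamma>_def field_simps power2_eq_square power3_eq_cube)
  also have "\<dots> \<noteq> 0" using \<open>R \<ge> 2\<close> \<open>m \<ge> 0\<close> by simp
  finally have "invertible (hessian (A r) (axis a 1))"
    using \<open>\<gamma> > 0\<close> assms
    by (intro arrowhead_invertible[where a = a and \<alpha> = "R * (R - 1)" and \<beta> = "R^2 * (R - 1)"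
          and \<delta> = "\<gamma> / 2" and \<gamma> = \<gamma>])
      (auto simp: hessian_A_axis_entries[OF assms] R_def m_def \<gamma>_def)
  then show ?thesis by (simp add: invertible_det_nz)
qed

theorem mainTheorem7:
  fixes r :: nat
  assumes "r \<ge> 2"
  shows "\<exists>\<xi>::real^'m::finite. det (hessian (A r) \<xi>) \<noteq> 0"
  using det_hessian_A_axis[OF assms] by blast

end
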